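(* Let $\mathsf{L}$ be a normal modal logic admitting finite chains, and let $t(x,y,z) = \Box(y\vee\Box(z\vee x))\vee x$. Then for every $n\in\mathbb{N}$, $\mathcal{V}_\mathsf{L}\not\models t^n(x,y,z)\approx t^{n+1}(x,y,z)$.
   Context: $\mathcal{V}_\mathsf{L}$ denotes the variety of modal algebras corresponding to $\mathsf{L}$. Iterates in the first argument: $t^0(x,y,z):=x$, $t^{k+1}(x,y,z) := t(t^k(x,y,z),y,z)$. A finite chain is a Kripke frame $(C,R)$ with $C$ finite such that the reflexive closure of $R$ is a total order on $C$ (so an $n$-element chain is determined by a total order together with a choice of which points are reflexive). $\mathsf{L}$ admits finite chains if for each $n\in\mathbb{N}$ there is at least one $n$-element finite chain that is a frame for $\mathsf{L}$. *)

theory Defs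
  imports Main
begin

datatype fm = Var nat | Bot | Neg fm | And fm fm | Or fm fm | Box fm

definition Imp :: "fm \<Rightarrow> fm \<Rightarrow> fm" where
  "Imp p q = Or (Neg p) q"

text \<open>Classical tautologies: formulas true under every Boolean valuation
  treating variables and boxed subformulas as atoms.\<close>
fun peval :: "(fm \<Rightarrow> bool) \<Rightarrow> fm \<Rightarrow> bool" where
  "peval g (Var i) = g (Var i)"
| "peval g Bot = False"
| "peval g (Neg p) = (\<not> peval g p)"
| "peval g (And p q) = (peval g p \<and> peval g q)"
| "peval g (Or p q) = (peval g p \<or> peval g q)"
| "peval g (Box p) = g (Box p)"

definition taut :: "fm \<Rightarrow> bool" where
  "taut p \<longleftrightarrow> (\<forall>g. peval g p)"

fun subst :: "(nat \<Rightarrow> fm) \<Rightarrow> fm \<Rightarrow> fm" where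
  "subst s (Var i) = s i"
| "subst s Bot = Bot"
| "subst s (Neg p) = Neg (subst s p)"
| "subst s (And p q) = And (subst s p) (subst s q)"
| "subst s (Or p q) = Or (subst s p) (subst s q)"
| "subst s (Box p) = Box (subst s p)"

definition normal_logic :: "fm set \<Rightarrow> bool" where
  "normal_logic L \<longleftrightarrow>
     (\<forall>p. taut p \<longrightarrow> p \<in> L) \<and>
     (\<forall>p q. Imp (Box (Imp p q)) (Imp (Box p) (Box q)) \<in> L) \<and>
     (\<forall>p q. p \<in> L \<longrightarrow> Imp p q \<in> L \<longrightarrow> q \<in> L) \<and>
     (\<forall>p. p \<in> L \<longrightarrow> Box p \<in> L) \<and>
     (\<forall>p s. p \<in> L \<longrightarrow> subst s p \<in> L)"

record 'a malg =
  carrier :: "'a set"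
  jn :: "'a \<Rightarrow> 'a \<Rightarrow> 'a"
  mt :: "'a \<Rightarrow> 'a \<Rightarrow> 'a"
  cp :: "'a \<Rightarrow> 'a"
  bt :: 'a
  tp :: 'a
  bx :: "'a \<Rightarrow> 'a"

definition modal_algebra :: "'a malg \<Rightarrow> bool" where
  "modal_algebra A \<longleftrightarrow>
    (let C = carrier A; j = jn A; m = mt A in
     bt A \<in> C \<and> tp A \<in> C \<and>
     (\<forall>x\<in>C. \<forall>y\<in>C. j x y \<in> C \<and> m x y \<in> C) \<and>
     (\<forall>x\<in>C. cp A x \<in> C \<and> bx A x \<in> C) \<and>
     (\<forall>x\<in>C. \<forall>y\<in>C. j x y = j y x \<and> m x y = m y x) \<and>
     (\<forall>x\<in>C. \<forall>y\<in>C. \<forall>z\<in>C. j x (j y z) = j (j x y) z \<and> m x (m y z) = m (m x y) z) \<and>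
     (\<forall>x\<in>C. \<forall>y\<in>C. j x (m x y) = x \<and> m x (j x y) = x) \<and>
     (\<forall>x\<in>C. \<forall>y\<in>C. \<forall>z\<in>C. m x (j y z) = j (m x y) (m x z)) \<and>
     (\<forall>x\<in>C. j x (cp A x) = tp A \<and> m x (cp A x) = bt A) \<and>
     bx A (tp A) = tp A \<and>
     (\<forall>x\<in>C. \<forall>y\<in>C. bx A (m x y) = m (bx A x) (bx A y)))"

fun aeval :: "'a malg \<Rightarrow> (nat \<Rightarrow> 'a) \<Rightarrow> fm \<Rightarrow> 'a" where
  "aeval A v (Var i) = v i"
| "aeval A v Bot = bt A"
| "aeval A v (Neg p) = cp A (aeval A v p)"
| "aeval A v (And p q) = mt A (aeval A v p) (aeval A v q)"
| "aeval A v (Or p q) = jn A (aeval A v p) (aeval A v q)"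
| "aeval A v (Box p) = bx A (aeval A v p)"

definition alg_valid :: "'a malg \<Rightarrow> fm \<Rightarrow> bool" where
  "alg_valid A p \<longleftrightarrow> (\<forall>v. (\<forall>i. v i \<in> carrier A) \<longrightarrow> aeval A v p = tp A)"

definition alg_eq :: "'a malg \<Rightarrow> fm \<Rightarrow> fm \<Rightarrow> bool" where
  "alg_eq A s t \<longleftrightarrow> (\<forall>v. (\<forall>i. v i \<in> carrier A) \<longrightarrow> aeval A v s = aeval A v t)"

text \<open>Membership in the variety V_L.  Algebras are represented with carriers
  in a countably infinite type (nat).\<close>
definition in_VL :: "fm set \<Rightarrow> 'a malg \<Rightarrow> bool" where
  "in_VL L A \<longleftrightarrow> modal_algebra A \<and> (\<forall>p\<in>L. alg_valid A p)"

definition VL_models :: "fm set \<Rightarrow> fm \<Rightarrow> fm \<Rightarrow> bool" where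
  "VL_models L s t \<longleftrightarrow> (\<forall>A :: nat malg. in_VL L A \<longrightarrow> alg_eq A s t)"

fun ksat :: "'w rel \<Rightarrow> (nat \<Rightarrow> 'w set) \<Rightarrow> 'w \<Rightarrow> fm \<Rightarrow> bool" where
  "ksat R V w (Var i) = (w \<in> V i)"
| "ksat R V w Bot = False"
| "ksat R V w (Neg p) = (\<not> ksat R V w p)"
| "ksat R V w (And p q) = (ksat R V w p \<and> ksat R V w q)"
| "ksat R V w (Or p q) = (ksat R V w p \<or> ksat R V w q)"
| "ksat R V w (Box p) = (\<forall>u. (w, u) \<in> R \<longrightarrow> ksat R V u p)"

definition frame_valid :: "'w set \<Rightarrow> 'w rel \<Rightarrow> fm \<Rightarrow> bool" where
  "frame_valid C R p \<longleftrightarrow> (\<forall>V. (\<forall>i. V i \<subseteq> C) \<longrightarrow> (\<forall>w\<in>C. ksat R V w p))"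

definition finite_chain :: "'w set \<Rightarrow> 'w rel \<Rightarrow> bool" where
  "finite_chain C R \<longleftrightarrow> finite C \<and> R \<subseteq> C \<times> C \<and> linear_order_on C (R \<union> Id_on C)"

definition admits_finite_chains :: "fm set \<Rightarrow> bool" where
  "admits_finite_chains L \<longleftrightarrow>
     (\<forall>n::nat. \<exists>(C :: nat set) R. card C = n \<and> finite_chain C R \<and> (\<forall>p\<in>L. frame_valid C R p))"

definition tfm :: "fm \<Rightarrow> fm \<Rightarrow> fm \<Rightarrow> fm" where
  "tfm x y z = Or (Box (Or y (Box (Or z x)))) x"

fun titer :: "nat \<Rightarrow> fm" where
  "titer 0 = Var 0"
| "titer (Suc k) = tfm (titer k) (Var 1) (Var 2)"

end

theory Submission
  imports Defs "HOL-Library.Nat_Bijection"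
begin

text \<open>Count the strict successors of a point of a finite chain (its depth) and
  interpret x as the empty set, y as the points of even depth and z as the points
  of odd depth.  Then t^k holds at every point of depth at most 2k - 2 and at no
  point of depth at least 2k, so on a chain with 2n + 1 points the point of depth
  2n satisfies t^(n+1) but not t^n.  The complex algebra of a chain that is a frame
  for L lies in V_L, so t^n = t^(n+1) fails there.\<close>

text \<open>V_L only contains algebras with carrier in nat, so the subsets of the
  finite set C are represented by their codes under set_encode.\<close>

definition complex_algebra :: "nat set \<Rightarrow> nat rel \<Rightarrow> nat malg" where
  "complex_algebra C R =
    \<lparr>carrier = set_encode ` Pow C,
     jn = \<lambda>a b. set_encode (set_decode a \<union> set_decode b),
     mt = \<lambda>a b. set_encode (set_decode a \<inter> set_decode b),
     cp = \<lambda>a. set_encode (C - set_decode a),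
     bt = set_encode {}, tp = set_encode C,
     bx = \<lambda>a. set_encode {w\<in>C. \<forall>u. (w, u) \<in> R \<longrightarrow> u \<in> set_decode a}\<rparr>"

lemma carrier_complex_algebraE:
  assumes "finite C" and "a \<in> carrier (complex_algebra C R)"
  obtains S where "S \<subseteq> C" "finite S" "a = set_encode S" "set_decode a = S"
  using assms by (auto simp: complex_algebra_def intro: finite_subset)

lemma ball_carrier_complex_algebra:
  "finite C \<Longrightarrow>
    (\<forall>a\<in>carrier (complex_algebra C R). P a) \<longleftrightarrow> (\<forall>S. S \<subseteq> C \<longrightarrow> finite S \<longrightarrow> P (set_encode S))"
  by (auto simp: complex_algebra_def intro: finite_subset)

lemma modal_algebra_complex_algebra:
  assumes "finite C" and "R \<subseteq> C \<times> C"
  shows "modal_algebra (complex_algebra C R)"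
proof -
  have box_top: "{w\<in>C. \<forall>u. (w, u) \<in> R \<longrightarrow> u \<in> C} = C"
    using assms(2) by auto
  have box_inter: "\<And>S T. {w\<in>C. \<forall>u. (w, u) \<in> R \<longrightarrow> u \<in> S \<and> u \<in> T} =
      {w\<in>C. \<forall>u. (w, u) \<in> R \<longrightarrow> u \<in> S} \<inter> {w\<in>C. \<forall>u. (w, u) \<in> R \<longrightarrow> u \<in> T}"
    by blast
  show ?thesis
    unfolding modal_algebra_def Let_def ball_carrier_complex_algebra[OF assms(1)]
    using assms(1) box_top
    by (simp add: complex_algebra_def Un_ac Int_ac Int_Un_distrib box_inter Un_absorb1 Un_absorb2
        del: set_encode_empty)
      (auto simp: complex_algebra_def)
qed

lemma aeval_complex_algebra:
  fixes v :: "nat \<Rightarrow> nat"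
  assumes "finite C" and "R \<subseteq> C \<times> C" and v: "\<forall>i. v i \<in> carrier (complex_algebra C R)"
  shows "aeval (complex_algebra C R) v p = set_encode {w\<in>C. ksat R (\<lambda>i. set_decode (v i)) w p}"
proof (induction p)
  case (Var i)
  from assms(1) v obtain S where "S \<subseteq> C" "v i = set_encode S" "set_decode (v i) = S"
    by (blast elim: carrier_complex_algebraE)
  then show ?case by (simp add: Int_absorb1 Collect_conj_eq)
next
  case Bot
  show ?case by (simp add: complex_algebra_def)
next
  case (Neg p)
  then show ?case
    using assms(1) by (simp add: complex_algebra_def) (rule arg_cong[where f = set_encode], auto)
next
  case (And p q)
  then show ?case
    using assms(1) by (simp add: complex_algebra_def) (rule arg_cong[where f = set_encode], auto)
next
  case (Or p q)
  then show ?case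
    using assms(1) by (simp add: complex_algebra_def) (rule arg_cong[where f = set_encode], auto)
next
  case (Box p)
  then show ?case
    using assms(1,2) by (simp add: complex_algebra_def) (rule arg_cong[where f = set_encode], auto)
qed

lemma in_VL_complex_algebra:
  assumes "finite C" and "R \<subseteq> C \<times> C" and "\<forall>p\<in>L. frame_valid C R p"
  shows "in_VL L (complex_algebra C R)"
  unfolding in_VL_def
proof (intro conjI ballI)
  show "modal_algebra (complex_algebra C R)"
    using assms(1,2) by (rule modal_algebra_complex_algebra)
  fix p assume "p \<in> L"
  show "alg_valid (complex_algebra C R) p"
    unfolding alg_valid_def
  proof (intro allI impI)
    fix v :: "nat \<Rightarrow> nat"
    assume v: "\<forall>i. v i \<in> carrier (complex_algebra C R)"
    have "set_decode (v i) \<subseteq> C" for i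
      using assms(1) v by (blast elim: carrier_complex_algebraE)
    moreover have "frame_valid C R p"
      using assms(3) \<open>p \<in> L\<close> ..
    ultimately have "\<forall>w\<in>C. ksat R (\<lambda>i. set_decode (v i)) w p"
      unfolding frame_valid_def by simp
    then have "{w\<in>C. ksat R (\<lambda>i. set_decode (v i)) w p} = C"
      by blast
    then show "aeval (complex_algebra C R) v p = tp (complex_algebra C R)"
      using aeval_complex_algebra[OF assms(1,2) v] by (simp add: complex_algebra_def)
  qed
qed

lemma ksat_eq_if_alg_eq_complex_algebra:
  assumes "finite C" and "R \<subseteq> C \<times> C" and "alg_eq (complex_algebra C R) p q"
    and V: "\<forall>i. V i \<subseteq> C"
  shows "{w\<in>C. ksat R V w p} = {w\<in>C. ksat R V w q}"
proof -
  define v where "v i = set_encode (V i)" for i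
  have finite_V: "finite (V i)" for i
    using V assms(1) by (blast intro: finite_subset)
  have v: "\<forall>i. v i \<in> carrier (complex_algebra C R)"
    using V by (auto simp: v_def complex_algebra_def)
  have decode_v: "(\<lambda>i. set_decode (v i)) = V"
    using finite_V by (simp add: v_def)
  have "aeval (complex_algebra C R) v p = aeval (complex_algebra C R) v q"
    using assms(3) v unfolding alg_eq_def by blast
  then have "set_encode {w\<in>C. ksat R V w p} = set_encode {w\<in>C. ksat R V w q}"
    using aeval_complex_algebra[OF assms(1,2) v] decode_v by simp
  then show ?thesis
    using assms(1) by (subst (asm) set_encode_eq) auto
qed

definition depth :: "'w set \<Rightarrow> 'w rel \<Rightarrow> 'w \<Rightarrow> nat" where
  "depth C R w = card {u\<in>C. (w, u) \<in> R \<and> u \<noteq> w}"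

locale chain_frame =
  fixes C :: "'w set" and R :: "'w rel"
  assumes chain: "finite_chain C R"
begin

lemma finite_carrier: "finite C"
  and rel_subset: "R \<subseteq> C \<times> C"
  and trans_refl: "trans (R \<union> Id_on C)"
  and antisym_refl: "antisym (R \<union> Id_on C)"
  and total_refl: "total_on C (R \<union> Id_on C)"
  using chain
  unfolding finite_chain_def linear_order_on_def partial_order_on_def preorder_on_def
  by auto

lemma related_or_converse: "a \<in> C \<Longrightarrow> b \<in> C \<Longrightarrow> a \<noteq> b \<Longrightarrow> (a, b) \<in> R \<or> (b, a) \<in> R"
  using total_refl unfolding total_on_def by (auto simp: Id_on_def)

lemma strict_trans:
  assumes "(a, b) \<in> R" "a \<noteq> b" "(b, c) \<in> R" "b \<noteq> c"
  shows "(a, c) \<in> R \<and> a \<noteq> c"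
proof
  have "(a, c) \<in> R \<union> Id_on C"
    using trans_refl assms by (meson UnI1 transD)
  moreover show "a \<noteq> c"
  proof
    assume "a = c"
    then have "a = b"
      using antisymD[OF antisym_refl, of a b] assms by auto
    with assms show False by simp
  qed
  ultimately show "(a, c) \<in> R" by (auto simp: Id_on_def)
qed

lemma depth_less:
  assumes "(a, b) \<in> R" "a \<noteq> b"
  shows "depth C R b < depth C R a"
  unfolding depth_def
proof (rule psubset_card_mono)
  show "finite {u\<in>C. (a, u) \<in> R \<and> u \<noteq> a}"
    using finite_carrier by simp
  have "b \<in> C"
    using assms rel_subset by auto
  then show "{u\<in>C. (b, u) \<in> R \<and> u \<noteq> b} \<subset> {u\<in>C. (a, u) \<in> R \<and> u \<noteq> a}"
    using strict_trans[OF assms] assms by blast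
qed

lemma depth_mono: "(a, b) \<in> R \<Longrightarrow> depth C R b \<le> depth C R a"
  by (cases "a = b") (auto dest: depth_less)

lemma related_if_depth_less:
  assumes "a \<in> C" "b \<in> C" "depth C R b < depth C R a"
  shows "(a, b) \<in> R"
  using related_or_converse[OF assms(1,2)] depth_less[of b a] assms by fastforce

lemma depth_less_card:
  assumes "w \<in> C"
  shows "depth C R w < card C"
proof -
  have "depth C R w \<le> card (C - {w})"
    unfolding depth_def using finite_carrier by (intro card_mono) auto
  also have "\<dots> < card C"
    using finite_carrier assms by (rule card_Diff1_less)
  finally show ?thesis .
qed

lemma inj_on_depth: "inj_on (depth C R) C"
  by (rule inj_onI) (metis related_or_converse depth_less less_irrefl)

lemma depth_image: "depth C R ` C = {..<card C}"
proof (rule card_subset_eq)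
  show "depth C R ` C \<subseteq> {..<card C}"
    using depth_less_card by auto
  show "card (depth C R ` C) = card {..<card C}"
    using card_image[OF inj_on_depth] by simp
qed simp

lemma depth_attained:
  assumes "i < card C"
  obtains w where "w \<in> C" "depth C R w = i"
  using assms depth_image by (metis imageE lessThan_iff)

end

definition parity_valuation :: "'w set \<Rightarrow> 'w rel \<Rightarrow> nat \<Rightarrow> 'w set" where
  "parity_valuation C R i =
    (if i = 1 then {w\<in>C. even (depth C R w)}
     else if i = 2 then {w\<in>C. odd (depth C R w)} else {})"

lemma ksat_titer_Suc:
  "ksat R V w (titer (Suc k)) \<longleftrightarrow>
    (\<forall>u. (w, u) \<in> R \<longrightarrow> u \<in> V 1 \<or> (\<forall>v. (u, v) \<in> R \<longrightarrow> v \<in> V 2 \<or> ksat R V v (titer k)))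
    \<or> ksat R V w (titer k)"
  by (simp add: tfm_def)

context chain_frame
begin

lemma titer_holds_if_depth_small:
  "depth C R w + 2 \<le> 2 * k \<Longrightarrow> ksat R (parity_valuation C R) w (titer k)"
proof (induction k arbitrary: w)
  case 0
  then show ?case by simp
next
  case (Suc k)
  let ?V = "parity_valuation C R"
  show ?case
  proof (cases "depth C R w + 2 \<le> 2 * k")
    case True
    then show ?thesis
      using Suc.IH unfolding ksat_titer_Suc by blast
  next
    case False
    have "u \<in> ?V 1 \<or> (\<forall>v. (u, v) \<in> R \<longrightarrow> v \<in> ?V 2 \<or> ksat R ?V v (titer k))"
      if wu: "(w, u) \<in> R" for u
    proof (cases "even (depth C R u)")
      case True
      then show ?thesis
        using wu rel_subset by (auto simp: parity_valuation_def)
    next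
      case odd_u: False
      have "depth C R v + 2 \<le> 2 * k \<or> v \<in> ?V 2" if uv: "(u, v) \<in> R" for v
        using depth_mono[OF wu] depth_mono[OF uv] Suc.prems odd_u uv rel_subset
        by (auto simp: parity_valuation_def) presburger
      then show ?thesis
        using Suc.IH by blast
    qed
    then show ?thesis
      unfolding ksat_titer_Suc by blast
  qed
qed

lemma titer_fails_if_depth_large:
  "w \<in> C \<Longrightarrow> 2 * k \<le> depth C R w \<Longrightarrow> \<not> ksat R (parity_valuation C R) w (titer k)"
proof (induction k arbitrary: w)
  case 0
  then show ?case by (simp add: parity_valuation_def)
next
  case (Suc k)
  let ?V = "parity_valuation C R"
  have "2 * k + 1 < card C"
    using Suc.prems depth_less_card[of w] by simp
  then obtain u where u: "u \<in> C" "depth C R u = 2 * k + 1"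
    by (rule depth_attained)
  have "2 * k < card C"
    using \<open>2 * k + 1 < card C\<close> by simp
  then obtain v where v: "v \<in> C" "depth C R v = 2 * k"
    by (rule depth_attained)
  have "(w, u) \<in> R" "(u, v) \<in> R"
    using related_if_depth_less Suc.prems u v by simp_all
  moreover have "u \<notin> ?V 1" "v \<notin> ?V 2"
    using u v by (simp_all add: parity_valuation_def)
  moreover have "\<not> ksat R ?V v (titer k)" "\<not> ksat R ?V w (titer k)"
    using Suc.IH Suc.prems v by simp_all
  ultimately show ?case
    unfolding ksat_titer_Suc by blast
qed

end

theorem lemma4p2:
  fixes L :: "fm set" and n :: nat
  assumes "normal_logic L" and "admits_finite_chains L"
  shows "\<not> VL_models L (titer n) (titer (Suc n))"
proof
  assume models: "VL_models L (titer n) (titer (Suc n))"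
  obtain C :: "nat set" and R where card: "card C = Suc (2 * n)" and "finite_chain C R"
    and frame: "\<forall>p\<in>L. frame_valid C R p"
    using assms(2) unfolding admits_finite_chains_def by blast
  then interpret chain_frame C R
    by unfold_locales
  have "in_VL L (complex_algebra C R)"
    using finite_carrier rel_subset frame by (rule in_VL_complex_algebra)
  then have "alg_eq (complex_algebra C R) (titer n) (titer (Suc n))"
    using models unfolding VL_models_def by blast
  then have sat_eq: "{w\<in>C. ksat R (parity_valuation C R) w (titer n)} =
      {w\<in>C. ksat R (parity_valuation C R) w (titer (Suc n))}"
    by (rule ksat_eq_if_alg_eq_complex_algebra[OF finite_carrier rel_subset])
      (auto simp: parity_valuation_def)
  have "2 * n < card C"
    using card by simp
  then obtain w where "w \<in> C" "depth C R w = 2 * n"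
    by (rule depth_attained)
  then show False
    using sat_eq titer_holds_if_depth_small[of w "Suc n"] titer_fails_if_depth_large[of w n]
    by auto
qed

end
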